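(* Let $\psi$ be an $n$-dimensional unique sink orientation, and let $v^0, v^1, \dots, v^\rho$ be the sequence of vertices produced by Algorithm 1 started at $v^0$, where $\rho$ is the iteration in which the algorithm terminates. Then $r_\psi(v^0) \supseteq r_\psi(v^1) \supseteq \dots \supseteq r_\psi(v^\rho)$.
   Context: Let $Q^n = 2^{[n]}$ be the vertex set of the $n$-cube, with $u,v$ adjacent iff $|u\oplus v|=1$; faces are $F_{J,v}=\{u : v\oplus u\subseteq J\}$ for $J\subseteq[n]$. A unique sink orientation (USO) is an orientation of the cube's edges such that every nonempty face has a unique sink (vertex with no outgoing edges within the face). The outmap $s_\psi(v)$ is the set of coordinates $j$ such that the edge $\{v,v\oplus\{j\}\}$ is directed away from $v$. The reachmap is $r_\psi(v)=s_\psi(v)\cup\{j : \exists u \text{ reachable from } v \text{ by a directed path with } j\in s_\psi(u)\}$. Algorithm 1: given a starting vertex $v^0$, set $E^0=\emptyset$ and $j=0$; while $s_\psi(v^j)\neq\emptyset$: pick any $b\in s_\psi(v^j)$, let $v^{j+1}$ be the sink of the face $F_{E^j, v^j\oplus\{b\}}$ (computed by the Fibonacci Seesaw algorithm of Szabó and Welzl), set $E^{j+1}=E^j\cup\{b\}$ and $j\leftarrow j+1$. The algorithm terminates at iteration $\rho$ when $s_\psi(v^\rho)=\emptyset$. *)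

theory Defs
  imports Main
begin

text \<open>Vertices of the n-cube are subsets of {1..n}; orientations are given by a
  relation d, where d u v means the edge {u,v} is directed from u to v.\<close>

definition sdiff :: "nat set \<Rightarrow> nat set \<Rightarrow> nat set" where
  "sdiff u v = (u - v) \<union> (v - u)"

definition cube :: "nat \<Rightarrow> nat set set" where
  "cube n = Pow {1..n}"

definition adjacent :: "nat set \<Rightarrow> nat set \<Rightarrow> bool" where
  "adjacent u v \<longleftrightarrow> card (sdiff u v) = 1"

definition orientation :: "nat \<Rightarrow> (nat set \<Rightarrow> nat set \<Rightarrow> bool) \<Rightarrow> bool" where
  "orientation n d \<longleftrightarrow>
     (\<forall>u v. d u v \<longrightarrow> u \<in> cube n \<and> v \<in> cube n \<and> adjacent u v) \<and>
     (\<forall>u\<in>cube n. \<forall>v\<in>cube n. adjacent u v \<longrightarrow> (d u v \<longleftrightarrow> \<not> d v u))"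

definition face :: "nat \<Rightarrow> nat set \<Rightarrow> nat set \<Rightarrow> nat set set" where
  "face n J v = {u \<in> cube n. sdiff v u \<subseteq> J}"

definition is_sink :: "(nat set \<Rightarrow> nat set \<Rightarrow> bool) \<Rightarrow> nat set set \<Rightarrow> nat set \<Rightarrow> bool" where
  "is_sink d F x \<longleftrightarrow> x \<in> F \<and> (\<forall>y\<in>F. \<not> d x y)"

definition USO :: "nat \<Rightarrow> (nat set \<Rightarrow> nat set \<Rightarrow> bool) \<Rightarrow> bool" where
  "USO n d \<longleftrightarrow> orientation n d \<and>
     (\<forall>J. J \<subseteq> {1..n} \<longrightarrow> (\<forall>v\<in>cube n. \<exists>!x. is_sink d (face n J v) x))"

definition face_sink :: "nat \<Rightarrow> (nat set \<Rightarrow> nat set \<Rightarrow> bool) \<Rightarrow> nat set \<Rightarrow> nat set \<Rightarrow> nat set" where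
  "face_sink n d J v = (THE x. is_sink d (face n J v) x)"

definition outmap :: "nat \<Rightarrow> (nat set \<Rightarrow> nat set \<Rightarrow> bool) \<Rightarrow> nat set \<Rightarrow> nat set" where
  "outmap n d v = {j \<in> {1..n}. d v (sdiff v {j})}"

definition reachable :: "(nat set \<Rightarrow> nat set \<Rightarrow> bool) \<Rightarrow> nat set \<Rightarrow> nat set \<Rightarrow> bool" where
  "reachable d v u \<longleftrightarrow> (v, u) \<in> {(x, y). d x y}\<^sup>*"

definition reachmap :: "nat \<Rightarrow> (nat set \<Rightarrow> nat set \<Rightarrow> bool) \<Rightarrow> nat set \<Rightarrow> nat set" where
  "reachmap n d v = outmap n d v \<union> {j. \<exists>u. reachable d v u \<and> j \<in> outmap n d u}"

text \<open>A run of Algorithm 1: vertex sequence v, sets E, chosen coordinates b,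
  terminating at iteration rho. The face sink is unique, so the way it is computed
  (Fibonacci Seesaw) is irrelevant.\<close>
definition alg1_run :: "nat \<Rightarrow> (nat set \<Rightarrow> nat set \<Rightarrow> bool) \<Rightarrow> (nat \<Rightarrow> nat set) \<Rightarrow>
    (nat \<Rightarrow> nat set) \<Rightarrow> (nat \<Rightarrow> nat) \<Rightarrow> nat \<Rightarrow> bool" where
  "alg1_run n d v E b rho \<longleftrightarrow>
     v 0 \<in> cube n \<and> E 0 = {} \<and>
     (\<forall>j<rho. outmap n d (v j) \<noteq> {} \<and> b j \<in> outmap n d (v j) \<and>
        v (Suc j) = face_sink n d (E j) (sdiff (v j) {b j}) \<and>
        E (Suc j) = insert (b j) (E j)) \<and>
     outmap n d (v rho) = {}"

end

theory Submission
  imports Defs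
begin

text \<open>Every vertex u reaches the sink of each face through u: this is proved by induction
  on the set of free coordinates J. Adding a coordinate j, the sink s' of the smaller face
  through u is reachable from u; if it is not the sink s of the larger face, it has an
  outgoing edge to some y across coordinate j, and s lies in the smaller face through y,
  so y reaches s. In Algorithm 1, v^(j+1) is the sink of a face through the out-neighbour
  v^j + b^j of v^j, hence reachable from v^j; reachability is transitive, and the reachmap
  is antitone along reachability.\<close>

lemma reachable_refl: "reachable d u u"
  by (simp add: reachable_def)

lemma reachable_trans: "reachable d u x \<Longrightarrow> reachable d x y \<Longrightarrow> reachable d u y"
  unfolding reachable_def by (rule rtrancl_trans)

lemma reachable_step: "d u x \<Longrightarrow> reachable d x y \<Longrightarrow> reachable d u y"
  unfolding reachable_def by (simp add: converse_rtrancl_into_rtrancl)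

lemma reachmap_antimono: "reachable d v w \<Longrightarrow> reachmap n d w \<subseteq> reachmap n d v"
  unfolding reachmap_def by (auto intro: reachable_trans reachable_refl)

lemma sdiff_commute: "sdiff u w = sdiff w u"
  by (auto simp: sdiff_def)

lemma sdiff_triangle: "sdiff w x \<subseteq> sdiff w u \<union> sdiff u x"
  by (auto simp: sdiff_def)

lemma sdiff_across_coordinate:
  assumes "j \<in> sdiff u y" "j \<in> sdiff u s"
    and "sdiff u y \<subseteq> insert j J" "sdiff u s \<subseteq> insert j J"
  shows "sdiff y s \<subseteq> J"
  using assms by (auto simp: sdiff_def)

lemma face_mono: "J \<subseteq> K \<Longrightarrow> face n J u \<subseteq> face n K u"
  by (auto simp: face_def)

lemma face_eq_of_mem:
  assumes "u \<in> face n J w"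
  shows "face n J u = face n J w"
proof -
  have "sdiff u w \<subseteq> J" using assms by (simp add: face_def sdiff_commute)
  then have "sdiff u x \<subseteq> J \<longleftrightarrow> sdiff w x \<subseteq> J" for x
    using sdiff_triangle[of u x w] sdiff_triangle[of w x u] by (auto simp: sdiff_commute)
  then show ?thesis by (simp add: face_def)
qed

lemma is_sink_subset: "is_sink d F s \<Longrightarrow> s \<in> G \<Longrightarrow> G \<subseteq> F \<Longrightarrow> is_sink d G s"
  by (auto simp: is_sink_def)

lemma USO_face_sink_exists:
  "USO n d \<Longrightarrow> J \<subseteq> {1..n} \<Longrightarrow> u \<in> cube n \<Longrightarrow> \<exists>!s. is_sink d (face n J u) s"
  unfolding USO_def by blast

lemma USO_reachable_face_sink:
  assumes uso: "USO n d" and "J \<subseteq> {1..n}" "u \<in> cube n" "is_sink d (face n J u) s"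
  shows "reachable d u s"
proof -
  have "finite J" using assms(2) finite_subset by blast
  then show ?thesis using assms(2-)
  proof (induction J arbitrary: u s rule: finite_induct)
    case empty
    then have "s = u"
      by (auto simp: is_sink_def face_def sdiff_def)
    then show ?case by (simp add: reachable_refl)
  next
    case (insert j J)
    let ?F = "face n (insert j J) u"
    have J: "J \<subseteq> {1..n}" and jJ: "insert j J \<subseteq> {1..n}" using insert.prems(1) by auto
    note IH = insert.IH[OF J]
    have sub_u: "face n J u \<subseteq> ?F"
      by (rule face_mono) blast
    obtain s' where s': "is_sink d (face n J u) s'"
      using USO_face_sink_exists[OF uso J insert.prems(2)] by blast
    show ?case
    proof (cases "s \<in> face n J u")
      case True
      show ?thesis
        by (rule IH[OF insert.prems(2) is_sink_subset[OF insert.prems(3) True sub_u]])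
    next
      case s_out: False
      have s'F: "s' \<in> ?F" using s' sub_u by (auto simp: is_sink_def)
      have "s' \<noteq> s" using s' s_out by (auto simp: is_sink_def)
      then have "\<not> is_sink d ?F s'"
        using USO_face_sink_exists[OF uso jJ insert.prems(2)] insert.prems(3) by blast
      then obtain y where yF: "y \<in> ?F" and s'y: "d s' y"
        using s'F by (auto simp: is_sink_def)
      have y_out: "y \<notin> face n J u" using s' s'y by (auto simp: is_sink_def)
      have sF: "s \<in> ?F" using insert.prems(3) by (simp add: is_sink_def)
      have "sdiff y s \<subseteq> J"
        using sdiff_across_coordinate[of j u y s J] yF y_out sF s_out by (auto simp: face_def)
      then have "s \<in> face n J y" using sF by (simp add: face_def)
      moreover have "face n J y \<subseteq> ?F"
        using face_mono[of J "insert j J" n y] face_eq_of_mem[OF yF] by blast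
      ultimately have "is_sink d (face n J y) s"
        using insert.prems(3) is_sink_subset by blast
      then have "reachable d y s" using IH yF by (simp add: face_def)
      moreover have "reachable d u s'" using IH[OF insert.prems(2) s'] .
      ultimately show ?thesis using s'y reachable_step reachable_trans by metis
    qed
  qed
qed

lemma alg1_run_E_subset:
  assumes run: "alg1_run n d v E b rho"
  shows "j \<le> rho \<Longrightarrow> E j \<subseteq> {1..n}"
proof (induction j)
  case 0
  then show ?case using run by (simp add: alg1_run_def)
next
  case (Suc j)
  then have "b j \<in> outmap n d (v j)" "E (Suc j) = insert (b j) (E j)"
    using run unfolding alg1_run_def by auto
  then show ?case using Suc by (auto simp: outmap_def)
qed

lemma alg1_run_step_reachable:
  assumes uso: "USO n d" and run: "alg1_run n d v E b rho" and j: "j < rho"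
  shows "reachable d (v j) (v (Suc j))"
proof -
  let ?w = "sdiff (v j) {b j}"
  have "b j \<in> outmap n d (v j)" and vj: "v (Suc j) = face_sink n d (E j) ?w"
    using run j unfolding alg1_run_def by auto
  then have vw: "d (v j) ?w" by (simp add: outmap_def)
  then have w: "?w \<in> cube n" using uso unfolding USO_def orientation_def by blast
  have Ej: "E j \<subseteq> {1..n}" using alg1_run_E_subset[OF run] j by simp
  have "is_sink d (face n (E j) ?w) (v (Suc j))"
    unfolding vj face_sink_def by (rule theI'[OF USO_face_sink_exists[OF uso Ej w]])
  then have "reachable d ?w (v (Suc j))" by (rule USO_reachable_face_sink[OF uso Ej w])
  then show ?thesis by (rule reachable_step[of d, OF vw])
qed

lemma alg1_run_reachable:
  assumes uso: "USO n d" and run: "alg1_run n d v E b rho"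
  shows "i \<le> j \<Longrightarrow> j \<le> rho \<Longrightarrow> reachable d (v i) (v j)"
proof (induction j rule: dec_induct)
  case base
  show ?case by (rule reachable_refl)
next
  case (step j)
  then have "reachable d (v i) (v j)" by simp
  then show ?case
    by (rule reachable_trans[OF _ alg1_run_step_reachable[OF uso run]]) (use step.prems in simp)
qed

theorem lemma17:
  fixes n :: nat and d :: "nat set \<Rightarrow> nat set \<Rightarrow> bool"
    and v E :: "nat \<Rightarrow> nat set" and b :: "nat \<Rightarrow> nat" and rho :: nat
  assumes "USO n d"
    and "alg1_run n d v E b rho"
  shows "\<forall>i j. i \<le> j \<and> j \<le> rho \<longrightarrow> reachmap n d (v j) \<subseteq> reachmap n d (v i)"
  using reachmap_antimono[OF alg1_run_reachable[OF assms]] by blast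

end
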